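(* Consider an execution of algorithm $\mathcal{A}_3$ (described in the context) in an asynchronous shared-memory system of $n$ processes in which up to $t$ processes, with $n>2t$, may crash. Let $X_i$ be the smallest (with respect to inclusion) among all the snapshots $X_j$ obtained by processes at the end of their snapshot loop, and let $x_i$ be its number of non-$\bot$ entries. For a value $v$, let $\alpha_v^i$ be the number of entries of $X_i$ equal to $v$. If $\alpha_v^i < x_i - t$, then no correct process decides $v$.
   Context: Model: processes communicate through an atomic snapshot object $S$ with one entry per process (initially all $\bot$), supporting $\mathrm{update}(m)$ (process $p_i$ writes $m$ into its own entry) and $\mathrm{snapshot}()$ (returns the vector of all entries), both atomic (linearizable); consequently any two snapshots returned are ordered by inclusion of their sets of non-$\bot$ entries. Asynchronous: no timing bounds. A crashed process stops taking steps; a correct process never crashes. Algorithm $\mathcal{A}_3$, code of $p_i$ with initial value $m$: $p_i$ performs $S.\mathrm{update}(m)$, then repeatedly calls $L_i := S.\mathrm{snapshot}()$ until $L_i$ has at least $n-t$ non-$\bot$ entries; it sets $X_i := L_i$ and $x_i :=$ number of non-$\bot$ entries of $X_i$. If at least $x_i - t$ entries of $X_i$ equal $m$, it decides $m$; else, if some value $v$ has at least $x_i - t$ entries in $X_i$ equal to it, it decides such a $v$; else it decides $\bot$. *)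

theory Defs
  imports Main
begin

text \<open>Processes are 0..<n, values have type 'v,
  bottom is None.  Decision: None = not decided yet, Some None = decided bottom,
  Some (Some v) = decided v.  Program counter: 0 = before update, 1 = in snapshot loop,
  2 = done.\<close>

record 'v conf =
  mem :: "nat \<Rightarrow> 'v option"
  pc  :: "nat \<Rightarrow> nat"
  snap :: "nat \<Rightarrow> (nat \<Rightarrow> 'v option)"
  dec :: "nat \<Rightarrow> 'v option option"

definition nonbot :: "nat \<Rightarrow> (nat \<Rightarrow> 'v option) \<Rightarrow> nat" where
  "nonbot n L = card {k. k < n \<and> L k \<noteq> None}"

definition occ :: "nat \<Rightarrow> (nat \<Rightarrow> 'v option) \<Rightarrow> 'v \<Rightarrow> nat" where
  "occ n L v = card {k. k < n \<and> L k = Some v}"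

definition decision_ok :: "nat \<Rightarrow> nat \<Rightarrow> 'v \<Rightarrow> (nat \<Rightarrow> 'v option) \<Rightarrow> 'v option \<Rightarrow> bool" where
  "decision_ok n t mi L d =
     (if occ n L mi \<ge> nonbot n L - t then d = Some mi
      else if (\<exists>v. occ n L v \<ge> nonbot n L - t)
           then (\<exists>v. d = Some v \<and> occ n L v \<ge> nonbot n L - t)
           else d = None)"

definition init_conf :: "'v conf" where
  "init_conf = \<lparr>mem = (\<lambda>_. None), pc = (\<lambda>_. 0), snap = (\<lambda>_. (\<lambda>_. None)), dec = (\<lambda>_. None)\<rparr>"

definition step :: "nat \<Rightarrow> nat \<Rightarrow> (nat \<Rightarrow> 'v) \<Rightarrow> 'v conf \<Rightarrow> nat \<Rightarrow> 'v conf \<Rightarrow> bool" where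
  "step n t m s i s' =
     (if pc s i = 0 then
        s' = s\<lparr>mem := (mem s)(i := Some (m i)), pc := (pc s)(i := 1)\<rparr>
      else if pc s i = 1 then
        (if nonbot n (mem s) \<ge> n - t then
           (\<exists>d. decision_ok n t (m i) (mem s) d \<and>
                s' = s\<lparr>pc := (pc s)(i := 2), snap := (snap s)(i := mem s),
                       dec := (dec s)(i := Some d)\<rparr>)
         else s' = s)
      else s' = s)"

definition execution :: "nat \<Rightarrow> nat \<Rightarrow> (nat \<Rightarrow> 'v) \<Rightarrow> (nat \<Rightarrow> nat) \<Rightarrow> (nat \<Rightarrow> 'v conf) \<Rightarrow> bool" where
  "execution n t m sched run =
     (run 0 = init_conf \<and> (\<forall>k. sched k < n \<and> step n t m (run k) (sched k) (run (Suc k))))"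

text \<open>A process is correct iff it takes infinitely many steps; others crash.\<close>
definition correct :: "(nat \<Rightarrow> nat) \<Rightarrow> nat \<Rightarrow> bool" where
  "correct sched i = (\<forall>N. \<exists>k\<ge>N. sched k = i)"

end

theory Submission
  imports Defs
begin

text \<open>Deciding v requires at least x - t entries equal to v in one's snapshot, i.e. at most t
  non-bottom entries different from v.  Every deciding process's snapshot contains X_i, and
  the number of non-bottom entries different from v can only grow along inclusion of snapshots;
  in X_i it already exceeds t, so no process can decide v.\<close>

lemma occ_le_nonbot: "occ n L v \<le> nonbot n L"
  unfolding occ_def nonbot_def by (intro card_mono) auto

lemma nonbot_minus_occ:
  "nonbot n L - occ n L v = card {k. k < n \<and> L k \<noteq> None \<and> L k \<noteq> Some v}"
proof -
  have "{k. k < n \<and> L k \<noteq> None \<and> L k \<noteq> Some v} =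
      {k. k < n \<and> L k \<noteq> None} - {k. k < n \<and> L k = Some v}"
    by auto
  moreover have "card ({k. k < n \<and> L k \<noteq> None} - {k. k < n \<and> L k = Some v}) =
      nonbot n L - occ n L v"
    unfolding occ_def nonbot_def by (intro card_Diff_subset) auto
  ultimately show ?thesis by simp
qed

lemma nonbot_minus_occ_mono:
  assumes "X \<subseteq>\<^sub>m Y"
  shows "nonbot n X - occ n X v \<le> nonbot n Y - occ n Y v"
  unfolding nonbot_minus_occ
proof (rule card_mono)
  show "{k. k < n \<and> X k \<noteq> None \<and> X k \<noteq> Some v} \<subseteq> {k. k < n \<and> Y k \<noteq> None \<and> Y k \<noteq> Some v}"
    using assms by (force simp: map_le_def)
qed simp

lemma occ_below_threshold_mono:
  assumes "X \<subseteq>\<^sub>m Y" and "occ n X v < nonbot n X - t"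
  shows "occ n Y v < nonbot n Y - t"
  using nonbot_minus_occ_mono[OF assms(1), of n v] occ_le_nonbot[of n X v]
    occ_le_nonbot[of n Y v] assms(2)
  by linarith

lemma decision_ok_SomeD: "decision_ok n t mi L (Some v) \<Longrightarrow> occ n L v \<ge> nonbot n L - t"
  unfolding decision_ok_def by (auto split: if_splits)

definition decisions_justified :: "nat \<Rightarrow> nat \<Rightarrow> 'v conf \<Rightarrow> bool" where
  "decisions_justified n t s = (\<forall>j. (pc s j \<noteq> 2 \<longrightarrow> dec s j = None) \<and>
     (\<forall>v. dec s j = Some (Some v) \<longrightarrow> occ n (snap s j) v \<ge> nonbot n (snap s j) - t))"

lemma decisions_justified_step:
  assumes "decisions_justified n t s" and "step n t m s i s'"
  shows "decisions_justified n t s'"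
  using assms unfolding decisions_justified_def step_def
  by (auto split: if_splits dest: decision_ok_SomeD)

lemma execution_decisions_justified:
  assumes "execution n t m sched run"
  shows "decisions_justified n t (run k)"
proof (induction k)
  case 0
  then show ?case
    using assms by (simp add: execution_def decisions_justified_def init_conf_def)
next
  case (Suc k)
  then show ?case
    using assms decisions_justified_step unfolding execution_def by blast
qed

theorem lemma12:
  fixes n t :: nat and m :: "nat \<Rightarrow> 'v" and sched :: "nat \<Rightarrow> nat"
    and run :: "nat \<Rightarrow> 'v conf" and i k0 :: nat and v :: 'v
  assumes "n > 2 * t"
    and "execution n t m sched run"
    and "card {j. j < n \<and> \<not> correct sched j} \<le> t"
    and "i < n" and "pc (run k0) i = 2"
    and "\<forall>j k. j < n \<and> pc (run k) j = 2 \<longrightarrow> snap (run k0) i \<subseteq>\<^sub>m snap (run k) j"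
    and "occ n (snap (run k0) i) v < nonbot n (snap (run k0) i) - t"
  shows "\<forall>j k. j < n \<and> correct sched j \<longrightarrow> dec (run k) j \<noteq> Some (Some v)"
proof (intro allI impI notI)
  fix j k
  assume j: "j < n \<and> correct sched j" and decided: "dec (run k) j = Some (Some v)"
  have justified: "decisions_justified n t (run k)"
    using assms(2) by (rule execution_decisions_justified)
  then have "pc (run k) j = 2"
    using decided unfolding decisions_justified_def by force
  then have "snap (run k0) i \<subseteq>\<^sub>m snap (run k) j"
    using assms(6) j by blast
  then have "occ n (snap (run k) j) v < nonbot n (snap (run k) j) - t"
    using assms(7) by (rule occ_below_threshold_mono)
  moreover have "occ n (snap (run k) j) v \<ge> nonbot n (snap (run k) j) - t"
    using justified decided unfolding decisions_justified_def by blast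
  ultimately show False by simp
qed

end
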